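(* Consider a finite tabular MDP with a unique optimal policy $\pi^*$, in which all states are reachable: $d_\rho^\pi(s)\ge d_{\min}>0$ for all $s\in\mathcal S$ and all policies $\pi$ with full action support. Under the discrete EG update $\pi_{t+1}(a|s)=\pi_t(a|s)\,e^{\eta[U^t_a(s)]_+}/Z^t_s$ with a sufficiently small constant step size $\eta>0$ (started from a softmax policy), (1) $V(\pi_t)\to V^*=V(\pi^* )$, and (2) $\pi_t\to\pi^*$.
   Context: A finite MDP $(\mathcal S,\mathcal A,P,r,\gamma,\rho)$ has finite state and action spaces, transition kernel $P(s'|s,a)$, reward $r(s,a)\in[0,1]$, discount $\gamma\in[0,1)$, initial distribution $\rho$. Tabular softmax policies are $\pi_\theta(a|s)=e^{\theta(s,a)}/\sum_{a'}e^{\theta(s,a')}$. $V^\pi(s)$ and $Q^\pi(s,a)$ are the expected discounted returns from $s$ (resp. from $s$ taking $a$ first), $V(\pi)=\mathbb{E}_{s\sim\rho}V^\pi(s)$, $V^*$ the optimal value, and $d_\rho^\pi(s)=(1-\gamma)\sum_{t\ge0}\gamma^t\Pr(s_t=s\mid\rho,\pi)$. At iteration $t$, $U^t_a(s):=Q^{\pi_t}(s,a)-V^{\pi_t}(s)$, $[x]_+=\max(x,0)$, and $Z^t_s:=\sum_{a'}\pi_t(a'|s)e^{\eta[U^t_{a'}(s)]_+}$. *)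

theory Defs
  imports "HOL-Analysis.Analysis"
begin

text \<open>P s a s' = P(s'|s,a), r s a = reward, g = discount, rho = initial distribution.
  A (stationary, stochastic) policy is p s a = p(a|s).\<close>

definition stoch_policy :: "('s::finite \<Rightarrow> 'a::finite \<Rightarrow> real) \<Rightarrow> bool" where
  "stoch_policy p \<longleftrightarrow> (\<forall>s a. 0 \<le> p s a) \<and> (\<forall>s. (\<Sum>a\<in>UNIV. p s a) = 1)"

definition full_support :: "('s::finite \<Rightarrow> 'a::finite \<Rightarrow> real) \<Rightarrow> bool" where
  "full_support p \<longleftrightarrow> (\<forall>s a. 0 < p s a)"

definition valid_mdp ::
  "('s::finite \<Rightarrow> 'a::finite \<Rightarrow> 's \<Rightarrow> real) \<Rightarrow> ('s \<Rightarrow> 'a \<Rightarrow> real) \<Rightarrow> real \<Rightarrow> ('s \<Rightarrow> real) \<Rightarrow> bool" where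
  "valid_mdp P r g rho \<longleftrightarrow>
     (\<forall>s a s'. 0 \<le> P s a s') \<and> (\<forall>s a. (\<Sum>s'\<in>UNIV. P s a s') = 1) \<and>
     (\<forall>s a. 0 \<le> r s a \<and> r s a \<le> 1) \<and> 0 \<le> g \<and> g < 1 \<and>
     (\<forall>s. 0 \<le> rho s) \<and> (\<Sum>s\<in>UNIV. rho s) = 1"

fun state_dist ::
  "('s::finite \<Rightarrow> 'a::finite \<Rightarrow> 's \<Rightarrow> real) \<Rightarrow> ('s \<Rightarrow> 'a \<Rightarrow> real) \<Rightarrow> 's \<Rightarrow> nat \<Rightarrow> 's \<Rightarrow> real" where
  "state_dist P p s0 0 s = (if s = s0 then 1 else 0)"
| "state_dist P p s0 (Suc t) s =
     (\<Sum>s'\<in>UNIV. state_dist P p s0 t s' * (\<Sum>a\<in>UNIV. p s' a * P s' a s))"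

definition Vf ::
  "('s::finite \<Rightarrow> 'a::finite \<Rightarrow> 's \<Rightarrow> real) \<Rightarrow> ('s \<Rightarrow> 'a \<Rightarrow> real) \<Rightarrow> real \<Rightarrow> ('s \<Rightarrow> 'a \<Rightarrow> real) \<Rightarrow> 's \<Rightarrow> real" where
  "Vf P r g p s0 =
     (\<Sum>t. g ^ t * (\<Sum>s\<in>UNIV. state_dist P p s0 t s * (\<Sum>a\<in>UNIV. p s a * r s a)))"

definition Qf ::
  "('s::finite \<Rightarrow> 'a::finite \<Rightarrow> 's \<Rightarrow> real) \<Rightarrow> ('s \<Rightarrow> 'a \<Rightarrow> real) \<Rightarrow> real \<Rightarrow> ('s \<Rightarrow> 'a \<Rightarrow> real) \<Rightarrow> 's \<Rightarrow> 'a \<Rightarrow> real" where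
  "Qf P r g p s a = r s a + g * (\<Sum>s'\<in>UNIV. P s a s' * Vf P r g p s')"

definition Vrho ::
  "('s::finite \<Rightarrow> 'a::finite \<Rightarrow> 's \<Rightarrow> real) \<Rightarrow> ('s \<Rightarrow> 'a \<Rightarrow> real) \<Rightarrow> real \<Rightarrow> ('s \<Rightarrow> real) \<Rightarrow> ('s \<Rightarrow> 'a \<Rightarrow> real) \<Rightarrow> real" where
  "Vrho P r g rho p = (\<Sum>s\<in>UNIV. rho s * Vf P r g p s)"

definition Vstar ::
  "('s::finite \<Rightarrow> 'a::finite \<Rightarrow> 's \<Rightarrow> real) \<Rightarrow> ('s \<Rightarrow> 'a \<Rightarrow> real) \<Rightarrow> real \<Rightarrow> ('s \<Rightarrow> real) \<Rightarrow> real" where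
  "Vstar P r g rho = (SUP p\<in>{p. stoch_policy p}. Vrho P r g rho p)"

definition optimal_policy ::
  "('s::finite \<Rightarrow> 'a::finite \<Rightarrow> 's \<Rightarrow> real) \<Rightarrow> ('s \<Rightarrow> 'a \<Rightarrow> real) \<Rightarrow> real \<Rightarrow> ('s \<Rightarrow> 'a \<Rightarrow> real) \<Rightarrow> bool" where
  "optimal_policy P r g p \<longleftrightarrow> stoch_policy p \<and>
     (\<forall>p'. stoch_policy p' \<longrightarrow> (\<forall>s. Vf P r g p' s \<le> Vf P r g p s))"

definition dvis ::
  "('s::finite \<Rightarrow> 'a::finite \<Rightarrow> 's \<Rightarrow> real) \<Rightarrow> real \<Rightarrow> ('s \<Rightarrow> real) \<Rightarrow> ('s \<Rightarrow> 'a \<Rightarrow> real) \<Rightarrow> 's \<Rightarrow> real" where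
  "dvis P g rho p s = (1 - g) * (\<Sum>t. g ^ t * (\<Sum>s0\<in>UNIV. rho s0 * state_dist P p s0 t s))"

definition softmax :: "('s \<Rightarrow> 'a::finite \<Rightarrow> real) \<Rightarrow> 's \<Rightarrow> 'a \<Rightarrow> real" where
  "softmax theta s a = exp (theta s a) / (\<Sum>a'\<in>UNIV. exp (theta s a'))"

definition adv ::
  "('s::finite \<Rightarrow> 'a::finite \<Rightarrow> 's \<Rightarrow> real) \<Rightarrow> ('s \<Rightarrow> 'a \<Rightarrow> real) \<Rightarrow> real \<Rightarrow> ('s \<Rightarrow> 'a \<Rightarrow> real) \<Rightarrow> 's \<Rightarrow> 'a \<Rightarrow> real" where
  "adv P r g p s a = Qf P r g p s a - Vf P r g p s"

definition eg_step ::
  "('s::finite \<Rightarrow> 'a::finite \<Rightarrow> 's \<Rightarrow> real) \<Rightarrow> ('s \<Rightarrow> 'a \<Rightarrow> real) \<Rightarrow> real \<Rightarrow> real \<Rightarrow> ('s \<Rightarrow> 'a \<Rightarrow> real) \<Rightarrow> 's \<Rightarrow> 'a \<Rightarrow> real" where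
  "eg_step P r g eta p s a =
     p s a * exp (eta * max 0 (adv P r g p s a)) /
     (\<Sum>a'\<in>UNIV. p s a' * exp (eta * max 0 (adv P r g p s a')))"

end

theory Submission
  imports Defs
begin

(*
  Everything rests on the performance difference lemma: V^p(s) - V^q(s) is the discounted
  expectation, along the chain driven by p, of sum_a p(a|s) U^q_a(s).  For two consecutive EG
  iterates the integrand is nonnegative and at least c * sum_a pi_t(a|s) [U^t_a(s)]_+^2 at the
  starting state, so the values increase, converge, and the weighted positive advantages
  pi_t(a|s) [U^t_a(s)]_+ vanish.  The limiting advantages are therefore nonpositive: an action
  with positive limiting advantage would eventually have nondecreasing probability.  Comparing an
  arbitrary policy with pi_t by the same lemma gives V^p <= lim V^{pi_t}, so the values converge to
  V^{pi*}.  Finally, as d_rho >= d_min, the gap (1 - gamma) (V* - V(pi_t)) dominates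
  d_min pi_t(a|s) |A*(s,a)|, which forces pi_t(a|s) -> 0 whenever A*(s,a) < 0; by uniqueness pi*
  is deterministic and these are exactly the actions it never takes.
*)

lemma sum_delta_mult: "(\<Sum>x\<in>(UNIV::'b::finite set). (if x = y then 1 else 0) * f x) = (f y :: real)"
  by (simp add: if_distrib[of "\<lambda>c. c * _"] cong: if_cong)

lemma sum_le_member_nonpos:
  fixes f :: "'b \<Rightarrow> real"
  assumes "finite A" "a \<in> A" "\<And>x. x \<in> A \<Longrightarrow> f x \<le> 0"
  shows "sum f A \<le> f a"
  using member_le_sum[of a A "\<lambda>x. - f x"] assms by (simp add: sum_negf)

lemma tendsto_1_if_others_tendsto_0:
  fixes p :: "nat \<Rightarrow> 'a::finite \<Rightarrow> real"
  assumes sum1: "\<And>t. (\<Sum>b\<in>UNIV. p t b) = 1"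
    and others: "\<And>b. b \<noteq> a \<Longrightarrow> (\<lambda>t. p t b) \<longlonglongrightarrow> 0"
  shows "(\<lambda>t. p t a) \<longlonglongrightarrow> 1"
proof -
  have "p t a = 1 - (\<Sum>b\<in>UNIV - {a}. p t b)" for t
    using sum.remove[of UNIV a "p t"] sum1[of t] by simp
  moreover have "(\<lambda>t. 1 - (\<Sum>b\<in>UNIV - {a}. p t b)) \<longlonglongrightarrow> 1 - (\<Sum>b\<in>UNIV - {a}. 0)"
    using others by (intro tendsto_intros) auto
  ultimately show ?thesis by simp
qed

lemma exp_minus_1_le: "0 \<le> x \<Longrightarrow> exp x - 1 \<le> x * exp (x::real)"
  using mult_right_mono[OF exp_ge_add_one_self[of "-x"], of "exp x"] by (simp add: algebra_simps exp_minus_inverse)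

lemma pos_part_sq_le_exp_minus_1:
  fixes eta u :: real
  assumes "0 \<le> eta"
  shows "eta * (max 0 u)\<^sup>2 \<le> (exp (eta * max 0 u) - 1) * u"
proof (cases "0 \<le> u")
  case True
  have "eta * u \<le> exp (eta * u) - 1" using exp_ge_add_one_self[of "eta * u"] by linarith
  from mult_right_mono[OF this True] show ?thesis using True by (simp add: power2_eq_square algebra_simps)
qed simp

lemma stoch_policy_le_1: "stoch_policy p \<Longrightarrow> p s a \<le> 1"
  using member_le_sum[of a UNIV "p s"] by (simp add: stoch_policy_def)

lemma stoch_policy_one_imp_zero:
  assumes p: "stoch_policy p" and one: "p s a = 1" and "b \<noteq> a"
  shows "p s b = 0"
proof -
  have "(\<Sum>c\<in>{a, b}. p s c) \<le> (\<Sum>c\<in>UNIV. p s c)"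
    using p by (intro sum_mono2) (auto simp: stoch_policy_def)
  then show ?thesis using p one \<open>b \<noteq> a\<close> by (auto simp: stoch_policy_def intro: antisym)
qed

lemma stoch_policy_softmax: "stoch_policy (softmax theta)"
  and full_support_softmax: "full_support (softmax theta)"
proof -
  have "0 < (\<Sum>a\<in>UNIV. exp (theta s a))" for s by (rule sum_pos) auto
  note Z = this this[THEN dual_order.strict_implies_not_eq]
  from Z show "stoch_policy (softmax theta)" "full_support (softmax theta)"
    by (auto simp: stoch_policy_def full_support_def softmax_def sum_divide_distrib[symmetric] less_imp_le)
qed

definition set_action :: "('s \<Rightarrow> 'a \<Rightarrow> real) \<Rightarrow> 's \<Rightarrow> 'a \<Rightarrow> 's \<Rightarrow> 'a \<Rightarrow> real" where
  "set_action q s a = (\<lambda>s' b. if s' = s then (if b = a then 1 else 0) else q s' b)"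

lemma stoch_policy_set_action:
  assumes "stoch_policy q"
  shows "stoch_policy (set_action q s a)"
proof -
  have "(\<Sum>b\<in>UNIV. set_action q s a s' b) = 1" for s'
    using assms by (cases "s' = s") (auto simp: set_action_def stoch_policy_def)
  then show ?thesis using assms by (auto simp: set_action_def stoch_policy_def)
qed

section \<open>Discounted sums along a policy\<close>

definition pol_trans ::
  "('s::finite \<Rightarrow> 'a::finite \<Rightarrow> 's \<Rightarrow> real) \<Rightarrow> ('s \<Rightarrow> 'a \<Rightarrow> real) \<Rightarrow> 's \<Rightarrow> 's \<Rightarrow> real" where
  "pol_trans P p s s' = (\<Sum>a\<in>UNIV. p s a * P s a s')"

definition pol_mean :: "('s \<Rightarrow> 'a::finite \<Rightarrow> real) \<Rightarrow> ('s \<Rightarrow> 'a \<Rightarrow> real) \<Rightarrow> 's \<Rightarrow> real" where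
  "pol_mean p f s = (\<Sum>a\<in>UNIV. p s a * f s a)"

definition disc_sum ::
  "('s::finite \<Rightarrow> 'a::finite \<Rightarrow> 's \<Rightarrow> real) \<Rightarrow> real \<Rightarrow> ('s \<Rightarrow> 'a \<Rightarrow> real) \<Rightarrow> 's \<Rightarrow> ('s \<Rightarrow> real) \<Rightarrow> real" where
  "disc_sum P g p s0 f = (\<Sum>t. g ^ t * (\<Sum>s\<in>UNIV. state_dist P p s0 t s * f s))"

lemma state_dist_Suc_pol_trans:
  "state_dist P p s0 (Suc t) s = (\<Sum>s'\<in>UNIV. state_dist P p s0 t s' * pol_trans P p s' s)"
  by (simp add: pol_trans_def)

lemma state_dist_Suc_first:
  "state_dist P p s0 (Suc t) s = (\<Sum>s'\<in>UNIV. pol_trans P p s0 s' * state_dist P p s' t s)"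
proof (induction t arbitrary: s)
  case 0
  show ?case by (simp add: pol_trans_def sum_delta_mult if_distrib[of "\<lambda>c. _ * c"] cong: if_cong)
next
  case (Suc t)
  have "state_dist P p s0 (Suc (Suc t)) s
      = (\<Sum>x\<in>UNIV. (\<Sum>s'\<in>UNIV. pol_trans P p s0 s' * state_dist P p s' t x) * pol_trans P p x s)"
    by (simp only: state_dist_Suc_pol_trans[of _ _ _ "Suc t"] Suc)
  also have "\<dots> = (\<Sum>s'\<in>UNIV. pol_trans P p s0 s' * (\<Sum>x\<in>UNIV. state_dist P p s' t x * pol_trans P p x s))"
    unfolding sum_distrib_left sum_distrib_right mult.assoc by (rule sum.swap)
  finally show ?case by (simp only: state_dist_Suc_pol_trans)
qed

locale mdp =
  fixes P :: "'s::finite \<Rightarrow> 'a::finite \<Rightarrow> 's \<Rightarrow> real" and r :: "'s \<Rightarrow> 'a \<Rightarrow> real" and g :: real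
  assumes P_nonneg: "0 \<le> P s a s'" and P_sum: "(\<Sum>s'\<in>UNIV. P s a s') = 1"
    and r_nonneg: "0 \<le> r s a" and r_le_1: "r s a \<le> 1" and g_nonneg: "0 \<le> g" and g_less_1: "g < 1"
begin

abbreviation Vmax where "Vmax \<equiv> 1 / (1 - g)"

lemma pol_trans_nonneg: "stoch_policy p \<Longrightarrow> 0 \<le> pol_trans P p s s'"
  unfolding pol_trans_def stoch_policy_def by (auto intro!: sum_nonneg simp: P_nonneg)

lemma pol_trans_sum: "stoch_policy p \<Longrightarrow> (\<Sum>s'\<in>UNIV. pol_trans P p s s') = 1"
  unfolding pol_trans_def stoch_policy_def by (subst sum.swap) (simp add: sum_distrib_left[symmetric] P_sum)

lemma state_dist_nonneg: "stoch_policy p \<Longrightarrow> 0 \<le> state_dist P p s0 t s"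
  by (induction t arbitrary: s)
    (auto intro!: sum_nonneg mult_nonneg_nonneg pol_trans_nonneg
      simp: state_dist_Suc_pol_trans simp del: state_dist.simps(2))

lemma state_dist_sum: "stoch_policy p \<Longrightarrow> (\<Sum>s\<in>UNIV. state_dist P p s0 t s) = 1"
proof (induction t)
  case (Suc t)
  have "(\<Sum>s\<in>UNIV. state_dist P p s0 (Suc t) s)
      = (\<Sum>s'\<in>UNIV. state_dist P p s0 t s' * (\<Sum>s\<in>UNIV. pol_trans P p s' s))"
    unfolding state_dist_Suc_pol_trans sum_distrib_left by (rule sum.swap)
  with Suc show ?case by (simp add: pol_trans_sum)
qed simp

lemma state_dist_le_1: "stoch_policy p \<Longrightarrow> state_dist P p s0 t s \<le> 1"
  using member_le_sum[of s UNIV "state_dist P p s0 t"] by (simp add: state_dist_nonneg state_dist_sum)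

lemma abs_state_dist_mean_le:
  "stoch_policy p \<Longrightarrow> \<bar>\<Sum>s\<in>UNIV. state_dist P p s0 t s * f s\<bar> \<le> (\<Sum>s\<in>UNIV. \<bar>f s\<bar>)"
  by (rule order_trans[OF sum_abs sum_mono])
    (simp add: abs_mult state_dist_nonneg state_dist_le_1 mult_left_le_one_le)

lemma disc_sum_summable:
  "stoch_policy p \<Longrightarrow> summable (\<lambda>t. g ^ t * (\<Sum>s\<in>UNIV. state_dist P p s0 t s * f s))"
  by (rule summable_comparison_test'[where g="\<lambda>t. g ^ t * (\<Sum>s\<in>UNIV. \<bar>f s\<bar>)" and N=0])
    (auto intro!: summable_mult2 mult_left_mono simp: g_nonneg g_less_1 abs_mult abs_state_dist_mean_le)

lemma disc_sum_sums:
  "stoch_policy p \<Longrightarrow>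
    (\<lambda>t. g ^ t * (\<Sum>s\<in>UNIV. state_dist P p s0 t s * f s)) sums disc_sum P g p s0 f"
  unfolding disc_sum_def by (rule summable_sums[OF disc_sum_summable])

lemma disc_sum_unique:
  assumes p: "stoch_policy p" and h: "\<And>s. h s = f s + g * (\<Sum>s'\<in>UNIV. pol_trans P p s s' * h s')"
  shows "h s0 = disc_sum P g p s0 f"
proof -
  define T where "T t = g ^ t * (\<Sum>s\<in>UNIV. state_dist P p s0 t s * f s)" for t
  define R where "R t = g ^ t * (\<Sum>s\<in>UNIV. state_dist P p s0 t s * h s)" for t
  have R_Suc: "R t = T t + R (Suc t)" for t
  proof -
    have "(\<Sum>s\<in>UNIV. state_dist P p s0 t s * h s)
        = (\<Sum>s\<in>UNIV. state_dist P p s0 t s * f s)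
          + g * (\<Sum>s\<in>UNIV. \<Sum>s'\<in>UNIV. state_dist P p s0 t s * pol_trans P p s s' * h s')"
      by (subst h) (simp add: algebra_simps sum.distrib sum_distrib_left)
    also have "(\<Sum>s\<in>UNIV. \<Sum>s'\<in>UNIV. state_dist P p s0 t s * pol_trans P p s s' * h s')
        = (\<Sum>s\<in>UNIV. state_dist P p s0 (Suc t) s * h s)"
      unfolding state_dist_Suc_pol_trans sum_distrib_right by (rule sum.swap)
    finally show ?thesis unfolding R_def T_def by (simp add: algebra_simps)
  qed
  have partial: "h s0 = (\<Sum>t<n. T t) + R n" for n
  proof (induction n)
    case 0
    show ?case by (simp add: R_def sum_delta_mult)
  next
    case (Suc n)
    then show ?case using R_Suc[of n] by simp
  qed
  have "R \<longlonglongrightarrow> 0"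
  proof (rule Lim_null_comparison)
    show "\<forall>\<^sub>F t in sequentially. norm (R t) \<le> g ^ t * (\<Sum>s\<in>UNIV. \<bar>h s\<bar>)"
      using abs_state_dist_mean_le[OF p] by (simp add: R_def abs_mult g_nonneg mult_left_mono)
    show "(\<lambda>t. g ^ t * (\<Sum>s\<in>UNIV. \<bar>h s\<bar>)) \<longlonglongrightarrow> 0"
      using g_nonneg g_less_1 by (intro tendsto_mult_left_zero LIMSEQ_power_zero) simp
  qed
  then have "(\<lambda>n. h s0 - R n) \<longlonglongrightarrow> h s0"
    using tendsto_diff[OF tendsto_const, of R 0 _ "h s0"] by simp
  moreover have "(\<Sum>t<n. T t) = h s0 - R n" for n
    using partial[of n] by simp
  ultimately have "T sums h s0" by (simp add: sums_def)
  then show ?thesis using disc_sum_sums[OF p, of s0 f] unfolding T_def by (rule sums_unique2)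
qed

lemma Vf_eq_disc_sum: "Vf P r g p s0 = disc_sum P g p s0 (pol_mean p r)"
  by (simp add: Vf_def disc_sum_def pol_mean_def)

lemma Vf_bellman:
  assumes p: "stoch_policy p"
  shows "Vf P r g p s = pol_mean p r s + g * (\<Sum>s'\<in>UNIV. pol_trans P p s s' * Vf P r g p s')"
proof -
  define T where "T s' t = g ^ t * (\<Sum>x\<in>UNIV. state_dist P p s' t x * pol_mean p r x)" for s' t
  have T_sums: "T s' sums Vf P r g p s'" for s'
    unfolding T_def Vf_eq_disc_sum by (rule disc_sum_sums[OF p])
  have "T s (Suc t) = g * (\<Sum>s'\<in>UNIV. pol_trans P p s s' * T s' t)" for t
  proof -
    have "(\<Sum>x\<in>UNIV. state_dist P p s (Suc t) x * pol_mean p r x)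
        = (\<Sum>s'\<in>UNIV. \<Sum>x\<in>UNIV. pol_trans P p s s' * state_dist P p s' t x * pol_mean p r x)"
      unfolding state_dist_Suc_first sum_distrib_right by (rule sum.swap)
    then show ?thesis unfolding T_def by (simp add: sum_distrib_left algebra_simps)
  qed
  moreover have "(\<lambda>t. g * (\<Sum>s'\<in>UNIV. pol_trans P p s s' * T s' t))
      sums (g * (\<Sum>s'\<in>UNIV. pol_trans P p s s' * Vf P r g p s'))"
    by (intro sums_mult sums_sum T_sums)
  ultimately have "T s sums (g * (\<Sum>s'\<in>UNIV. pol_trans P p s s' * Vf P r g p s') + T s 0)"
    by (simp add: sums_Suc_iff[symmetric])
  moreover have "T s 0 = pol_mean p r s" by (simp add: T_def sum_delta_mult)
  ultimately show ?thesis using sums_unique2[OF T_sums] by simp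
qed

lemma pol_mean_const: "stoch_policy p \<Longrightarrow> pol_mean p (\<lambda>_ _. c) s = c"
  unfolding stoch_policy_def pol_mean_def by (simp add: sum_distrib_right[symmetric])

lemma pol_mean_Qf:
  "pol_mean p (Qf P r g q) s = pol_mean p r s + g * (\<Sum>s'\<in>UNIV. pol_trans P p s s' * Vf P r g q s')"
proof -
  have "pol_mean p (Qf P r g q) s
      = pol_mean p r s + g * (\<Sum>a\<in>UNIV. \<Sum>s'\<in>UNIV. p s a * P s a s' * Vf P r g q s')"
    by (simp add: pol_mean_def Qf_def algebra_simps sum.distrib sum_distrib_left)
  also have "(\<Sum>a\<in>UNIV. \<Sum>s'\<in>UNIV. p s a * P s a s' * Vf P r g q s')
      = (\<Sum>s'\<in>UNIV. pol_trans P p s s' * Vf P r g q s')"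
    by (subst sum.swap) (simp add: pol_trans_def sum_distrib_right)
  finally show ?thesis .
qed

lemma pol_mean_adv:
  "stoch_policy p \<Longrightarrow> pol_mean p (adv P r g q) s
    = pol_mean p r s + g * (\<Sum>s'\<in>UNIV. pol_trans P p s s' * Vf P r g q s') - Vf P r g q s"
  using pol_mean_Qf[of p q s] pol_mean_const[of p "Vf P r g q s" s]
  by (simp add: pol_mean_def adv_def right_diff_distrib sum_subtractf)

lemma pol_mean_adv_self: "stoch_policy p \<Longrightarrow> pol_mean p (adv P r g p) s = 0"
  by (simp add: pol_mean_adv Vf_bellman[symmetric])

lemma performance_difference:
  assumes p: "stoch_policy p" and q: "stoch_policy q"
  shows "Vf P r g p s0 - Vf P r g q s0 = disc_sum P g p s0 (pol_mean p (adv P r g q))"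
proof (rule disc_sum_unique[OF p])
  fix s
  show "Vf P r g p s - Vf P r g q s = pol_mean p (adv P r g q) s
      + g * (\<Sum>s'\<in>UNIV. pol_trans P p s s' * (Vf P r g p s' - Vf P r g q s'))"
    using Vf_bellman[OF p, of s] by (simp add: pol_mean_adv[OF p] algebra_simps sum_subtractf)
qed

lemma disc_sum_ge_first:
  assumes p: "stoch_policy p" and f: "\<And>s. 0 \<le> f s"
  shows "f s0 \<le> disc_sum P g p s0 f"
  using sum_le_suminf[OF disc_sum_summable[OF p], of "{0}" s0 f]
  by (simp add: disc_sum_def sum_delta_mult g_nonneg state_dist_nonneg[OF p] f sum_nonneg)

lemma disc_sum_mono:
  assumes p: "stoch_policy p" and f: "\<And>s. f s \<le> f' s"
  shows "disc_sum P g p s0 f \<le> disc_sum P g p s0 f'"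
  unfolding disc_sum_def
  by (intro suminf_le disc_sum_summable[OF p] mult_left_mono sum_mono)
    (auto simp: g_nonneg state_dist_nonneg[OF p] f)

lemma disc_sum_const:
  assumes p: "stoch_policy p"
  shows "disc_sum P g p s0 (\<lambda>_. c) = c / (1 - g)"
proof -
  have "(\<lambda>t. g ^ t * c) sums (1 / (1 - g) * c)"
    using g_nonneg g_less_1 by (intro sums_mult2 geometric_sums) simp
  then show ?thesis
    using disc_sum_sums[OF p, of s0 "\<lambda>_. c"] sums_unique2
    by (simp add: sum_distrib_right[symmetric] state_dist_sum[OF p])
qed

lemma pol_mean_reward_bounds:
  assumes p: "stoch_policy p"
  shows "0 \<le> pol_mean p r s \<and> pol_mean p r s \<le> 1"
proof
  show "0 \<le> pol_mean p r s"
    using p r_nonneg by (auto simp: pol_mean_def stoch_policy_def intro!: sum_nonneg)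
  have "pol_mean p r s \<le> pol_mean p (\<lambda>_ _. 1) s"
    using p r_le_1 unfolding pol_mean_def stoch_policy_def by (intro sum_mono mult_left_mono) auto
  then show "pol_mean p r s \<le> 1" by (simp add: pol_mean_const[OF p])
qed

lemma Vf_bounds: "stoch_policy p \<Longrightarrow> 0 \<le> Vf P r g p s \<and> Vf P r g p s \<le> Vmax"
  using disc_sum_mono[of p "\<lambda>_. 0" "pol_mean p r" s] disc_sum_mono[of p "pol_mean p r" "\<lambda>_. 1" s]
  by (simp add: Vf_eq_disc_sum disc_sum_const pol_mean_reward_bounds)

lemma adv_le_Vmax:
  assumes q: "stoch_policy q"
  shows "adv P r g q s a \<le> Vmax"
proof -
  have "(\<Sum>s'\<in>UNIV. P s a s' * Vf P r g q s') \<le> (\<Sum>s'\<in>UNIV. P s a s' * Vmax)"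
    by (intro sum_mono mult_left_mono) (auto simp: Vf_bounds[OF q] P_nonneg)
  also have "\<dots> = Vmax" by (simp add: sum_divide_distrib[symmetric] P_sum)
  finally have "g * (\<Sum>s'\<in>UNIV. P s a s' * Vf P r g q s') \<le> g * Vmax"
    by (rule mult_left_mono) (rule g_nonneg)
  then have "Qf P r g q s a \<le> 1 + g * Vmax"
    using r_le_1[of s a] by (simp add: Qf_def)
  also have "\<dots> = Vmax" using g_less_1 by (simp add: field_simps)
  finally show ?thesis using Vf_bounds[OF q, of s] by (simp add: adv_def)
qed

lemma rho_avg_disc_sum_eq_dvis:
  assumes p: "stoch_policy p"
  shows "(\<Sum>s0\<in>UNIV. rho s0 * disc_sum P g p s0 f) = (\<Sum>s\<in>UNIV. dvis P g rho p s * f s) / (1 - g)"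
proof -
  define Y where "Y s = (\<lambda>t. g ^ t * (\<Sum>s0\<in>UNIV. rho s0 * state_dist P p s0 t s))" for s
  have "summable (\<lambda>t. g ^ t * state_dist P p s0 t s)" for s0 s
    using disc_sum_summable[OF p, of s0 "\<lambda>s'. if s' = s then 1 else 0"]
    by (simp add: if_distrib[of "\<lambda>c. _ * c"] cong: if_cong)
  moreover have "Y s = (\<lambda>t. \<Sum>s0\<in>UNIV. rho s0 * (g ^ t * state_dist P p s0 t s))" for s
    by (simp add: Y_def fun_eq_iff sum_distrib_left mult.left_commute)
  ultimately have "summable (Y s)" for s by (simp add: summable_sum summable_mult)
  have "(\<lambda>t. \<Sum>s0\<in>UNIV. rho s0 * (g ^ t * (\<Sum>s\<in>UNIV. state_dist P p s0 t s * f s)))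
      sums (\<Sum>s0\<in>UNIV. rho s0 * disc_sum P g p s0 f)"
    by (intro sums_sum sums_mult disc_sum_sums[OF p])
  moreover have "(\<lambda>t. \<Sum>s\<in>UNIV. Y s t * f s) sums (\<Sum>s\<in>UNIV. suminf (Y s) * f s)"
    by (intro sums_sum sums_mult2 summable_sums \<open>\<And>s. summable (Y s)\<close>)
  moreover have "(\<Sum>s0\<in>UNIV. rho s0 * (g ^ t * (\<Sum>s\<in>UNIV. state_dist P p s0 t s * f s)))
      = (\<Sum>s\<in>UNIV. Y s t * f s)" for t
    unfolding Y_def sum_distrib_left sum_distrib_right by (subst sum.swap) (simp add: algebra_simps)
  ultimately have "(\<Sum>s0\<in>UNIV. rho s0 * disc_sum P g p s0 f) = (\<Sum>s\<in>UNIV. suminf (Y s) * f s)"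
    using sums_unique2 by simp
  also have "\<dots> = (\<Sum>s\<in>UNIV. dvis P g rho p s * f s) / (1 - g)"
    using g_less_1 by (simp add: dvis_def Y_def sum_divide_distrib)
  finally show ?thesis .
qed

section \<open>Optimal policies\<close>

lemma pol_mean_set_action_adv:
  "stoch_policy q \<Longrightarrow>
    pol_mean (set_action q s a) (adv P r g q) = (\<lambda>s'. if s' = s then adv P r g q s a else 0)"
  using pol_mean_adv_self[of q] by (auto simp: fun_eq_iff set_action_def pol_mean_def sum_delta_mult)

lemma optimal_adv_nonpos:
  assumes opt: "optimal_policy P r g q"
  shows "adv P r g q s a \<le> 0"
proof (rule ccontr)
  assume "\<not> adv P r g q s a \<le> 0"
  then have pos: "0 < adv P r g q s a" by simp
  have q: "stoch_policy q" using opt by (simp add: optimal_policy_def)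
  define p where "p = set_action q s a"
  have p: "stoch_policy p" unfolding p_def by (rule stoch_policy_set_action[OF q])
  have "adv P r g q s a \<le> disc_sum P g p s (\<lambda>s'. if s' = s then adv P r g q s a else 0)"
    using disc_sum_ge_first[OF p, of "\<lambda>s'. if s' = s then adv P r g q s a else 0" s]
      pos by simp
  also have "\<dots> = Vf P r g p s - Vf P r g q s"
    using performance_difference[OF p q, of s] by (simp add: p_def pol_mean_set_action_adv[OF q])
  also have "\<dots> \<le> 0"
    using opt p by (simp add: optimal_policy_def)
  finally show False using pos by simp
qed

lemma unique_optimal_adv_zero:
  assumes opt: "optimal_policy P r g q" and uniq: "\<forall>p. optimal_policy P r g p \<longrightarrow> p = q"
    and zero: "adv P r g q s a = 0"
  shows "q s a = 1"
proof -
  have q: "stoch_policy q" using opt by (simp add: optimal_policy_def)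
  define p where "p = set_action q s a"
  have p: "stoch_policy p" unfolding p_def by (rule stoch_policy_set_action[OF q])
  have "pol_mean p (adv P r g q) = (\<lambda>_. 0)"
    unfolding p_def pol_mean_set_action_adv[OF q] zero by simp
  then have "Vf P r g p s0 = Vf P r g q s0" for s0
    using performance_difference[OF p q, of s0] disc_sum_const[OF p, of s0 0] by simp
  then have "optimal_policy P r g p"
    using opt p by (simp add: optimal_policy_def)
  with uniq have "p = q" by blast
  then show ?thesis by (metis p_def set_action_def)
qed

lemma optimal_adv_neg:
  assumes opt: "optimal_policy P r g q" and neg: "adv P r g q s a < 0"
  shows "q s a = 0"
proof -
  have q: "stoch_policy q" using opt by (simp add: optimal_policy_def)
  have "- (q s a * adv P r g q s a) \<le> (\<Sum>b\<in>UNIV. - (q s b * adv P r g q s b))"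
    using q optimal_adv_nonpos[OF opt]
    by (intro member_le_sum) (auto simp: stoch_policy_def mult_nonneg_nonpos)
  also have "\<dots> = 0"
    using pol_mean_adv_self[OF q, of s] by (simp add: pol_mean_def sum_negf)
  finally show ?thesis
    using neg q by (auto simp: stoch_policy_def zero_le_mult_iff intro: antisym)
qed

lemma Vstar_eq_Vrho_optimal:
  assumes rho: "\<And>s. 0 \<le> rho s" and opt: "optimal_policy P r g q"
  shows "Vstar P r g rho = Vrho P r g rho q"
  unfolding Vstar_def
proof (rule cSup_eq_maximum)
  show "Vrho P r g rho q \<in> Vrho P r g rho ` {p. stoch_policy p}"
    using opt by (simp add: optimal_policy_def)
  show "x \<le> Vrho P r g rho q" if "x \<in> Vrho P r g rho ` {p. stoch_policy p}" for x
    using that opt rho unfolding Vrho_def optimal_policy_def by (auto intro!: sum_mono mult_left_mono)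
qed

lemma optimality_gap_ge:
  assumes p: "stoch_policy p" and opt: "optimal_policy P r g q"
    and dmin: "0 \<le> dmin" and reach: "\<And>s. dmin \<le> dvis P g rho p s"
  shows "dmin * (p s a * - adv P r g q s a) \<le> (1 - g) * (Vrho P r g rho q - Vrho P r g rho p)"
proof -
  have q: "stoch_policy q" using opt by (simp add: optimal_policy_def)
  let ?f = "pol_mean p (adv P r g q)"
  have term_nonpos: "p s' b * adv P r g q s' b \<le> 0" for s' b
    using p optimal_adv_nonpos[OF opt] by (simp add: stoch_policy_def mult_nonneg_nonpos)
  then have f_le: "?f s' \<le> p s' b * adv P r g q s' b" for s' b
    unfolding pol_mean_def by (intro sum_le_member_nonpos) auto
  then have f_nonpos: "?f s' \<le> 0" for s'
    using term_nonpos order_trans by blast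
  have "(1 - g) * (Vrho P r g rho p - Vrho P r g rho q) = (\<Sum>s'\<in>UNIV. dvis P g rho p s' * ?f s')"
    using rho_avg_disc_sum_eq_dvis[OF p, of rho ?f] g_less_1
    by (simp add: Vrho_def performance_difference[OF p q, symmetric] right_diff_distrib sum_subtractf)
  also have "\<dots> \<le> dvis P g rho p s * ?f s"
    using dmin reach f_nonpos by (intro sum_le_member_nonpos) (auto intro: mult_nonneg_nonpos order_trans)
  also have "\<dots> \<le> dmin * ?f s"
    by (rule mult_right_mono_neg[OF reach f_nonpos])
  also have "\<dots> \<le> dmin * (p s a * adv P r g q s a)"
    by (rule mult_left_mono[OF f_le dmin])
  finally show ?thesis by (simp add: algebra_simps)
qed

lemma policy_tendsto_0_if_adv_neg:
  fixes ps :: "nat \<Rightarrow> 's \<Rightarrow> 'a \<Rightarrow> real"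
  assumes opt: "optimal_policy P r g q"
    and dmin: "0 < dmin" and ps: "\<And>t. stoch_policy (ps t)"
    and reach: "\<And>t s. dmin \<le> dvis P g rho (ps t) s"
    and V: "(\<lambda>t. Vrho P r g rho (ps t)) \<longlonglongrightarrow> Vrho P r g rho q"
    and neg: "adv P r g q s a < 0"
  shows "(\<lambda>t. ps t s a) \<longlonglongrightarrow> 0"
proof (rule tendsto_sandwich)
  define k where "k = dmin * - adv P r g q s a"
  have k: "0 < k" unfolding k_def using dmin neg by (simp add: mult_pos_neg)
  let ?gap = "\<lambda>t. (1 - g) * (Vrho P r g rho q - Vrho P r g rho (ps t)) / k"
  show "\<forall>\<^sub>F t in sequentially. 0 \<le> ps t s a"
    using ps by (simp add: stoch_policy_def)
  have "ps t s a * k \<le> (1 - g) * (Vrho P r g rho q - Vrho P r g rho (ps t))" for t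
    using optimality_gap_ge[OF ps opt less_imp_le[OF dmin] reach, of t s a]
    by (simp add: k_def mult.left_commute)
  then show "\<forall>\<^sub>F t in sequentially. ps t s a \<le> ?gap t"
    using k by (simp add: pos_le_divide_eq)
  have "?gap \<longlonglongrightarrow> (1 - g) * (Vrho P r g rho q - Vrho P r g rho q) / k"
    using k by (intro tendsto_intros V) simp
  then show "?gap \<longlonglongrightarrow> 0" by simp
qed simp

lemma policy_tendsto_unique_optimal:
  fixes ps :: "nat \<Rightarrow> 's \<Rightarrow> 'a \<Rightarrow> real"
  assumes opt: "optimal_policy P r g q" and uniq: "\<forall>p. optimal_policy P r g p \<longrightarrow> p = q"
    and dmin: "0 < dmin" and ps: "\<And>t. stoch_policy (ps t)"
    and reach: "\<And>t s. dmin \<le> dvis P g rho (ps t) s"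
    and V: "(\<lambda>t. Vrho P r g rho (ps t)) \<longlonglongrightarrow> Vrho P r g rho q"
  shows "(\<lambda>t. ps t s a) \<longlonglongrightarrow> q s a"
proof -
  have q: "stoch_policy q" using opt by (simp add: optimal_policy_def)
  have tendsto_0: "(\<lambda>t. ps t s b) \<longlonglongrightarrow> 0" if "adv P r g q s b < 0" for b
    using policy_tendsto_0_if_adv_neg[OF opt dmin ps reach V that] .
  show ?thesis
  proof (cases "adv P r g q s a < 0")
    case True
    then show ?thesis using tendsto_0 optimal_adv_neg[OF opt] by simp
  next
    case False
    then have one: "q s a = 1"
      using unique_optimal_adv_zero[OF opt uniq] optimal_adv_nonpos[OF opt, of s a] by simp
    have "(\<lambda>t. ps t s b) \<longlonglongrightarrow> 0" if "b \<noteq> a" for b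
    proof (rule tendsto_0)
      have "q s b = 0" using stoch_policy_one_imp_zero[OF q one that] .
      then have "adv P r g q s b \<noteq> 0" using unique_optimal_adv_zero[OF opt uniq] by force
      then show "adv P r g q s b < 0" using optimal_adv_nonpos[OF opt, of s b] by simp
    qed
    then show ?thesis
      using tendsto_1_if_others_tendsto_0[of "\<lambda>t. ps t s" a] ps one by (simp add: stoch_policy_def)
  qed
qed

end

section \<open>The exponentiated-gradient iteration\<close>

locale eg_run = mdp P r g for P :: "'s::finite \<Rightarrow> 'a::finite \<Rightarrow> 's \<Rightarrow> real" and r g +
  fixes eta :: real and ps :: "nat \<Rightarrow> 's \<Rightarrow> 'a \<Rightarrow> real"
  assumes eta_pos: "0 < eta" and ps0_stoch: "stoch_policy (ps 0)" and ps0_pos: "full_support (ps 0)"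
    and ps_Suc: "ps (Suc t) = eg_step P r g eta (ps t)"
begin

abbreviation U where "U t \<equiv> adv P r g (ps t)"
abbreviation Z where "Z t s \<equiv> (\<Sum>a\<in>UNIV. ps t s a * exp (eta * max 0 (U t s a)))"
abbreviation S where "S t \<equiv> pol_mean (ps t) (\<lambda>s a. (max 0 (U t s a))\<^sup>2)"

lemma ps_Suc_eq: "ps (Suc t) s a = ps t s a * exp (eta * max 0 (U t s a)) / Z t s"
  by (simp add: ps_Suc eg_step_def)

lemma ps_stoch_full_support: "stoch_policy (ps t) \<and> full_support (ps t)"
proof (induction t)
  case 0
  show ?case using ps0_stoch ps0_pos by simp
next
  case (Suc t)
  then have pos: "0 < ps t s a" for s a by (simp add: full_support_def)
  then have Z_pos: "0 < Z t s" for s by (intro sum_pos) auto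
  have "(\<Sum>a\<in>UNIV. ps (Suc t) s a) = 1" for s
    unfolding ps_Suc_eq using Z_pos[of s] by (simp add: sum_divide_distrib[symmetric])
  moreover have "0 < ps (Suc t) s a" for s a
    unfolding ps_Suc_eq using pos Z_pos by simp
  ultimately show ?case by (auto simp: stoch_policy_def full_support_def less_imp_le)
qed

lemma ps_stoch: "stoch_policy (ps t)" and ps_pos: "0 < ps t s a"
  using ps_stoch_full_support by (auto simp: full_support_def)

lemma eta_pos_adv_le: "eta * max 0 (U t s a) \<le> eta * Vmax"
  using adv_le_Vmax[OF ps_stoch] g_less_1 eta_pos by (intro mult_left_mono) auto

lemma Z_ge_1: "1 \<le> Z t s"
proof -
  have "(\<Sum>a\<in>UNIV. ps t s a * 1) \<le> Z t s"
    using eta_pos ps_pos by (intro sum_mono mult_left_mono) (auto simp: less_imp_le)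
  then show ?thesis using ps_stoch[of t] by (simp add: stoch_policy_def)
qed

lemma Z_le: "Z t s \<le> exp (eta * Vmax)"
proof -
  have "Z t s \<le> (\<Sum>a\<in>UNIV. ps t s a * exp (eta * Vmax))"
    using eta_pos_adv_le ps_pos by (intro sum_mono mult_left_mono) (auto simp: less_imp_le)
  then show ?thesis using ps_stoch[of t] by (simp add: stoch_policy_def sum_distrib_right[symmetric])
qed

lemma S_nonneg: "0 \<le> S t s"
  unfolding pol_mean_def by (intro sum_nonneg mult_nonneg_nonneg) (auto simp: less_imp_le ps_pos)

lemma pol_mean_next_adv_ge: "eta / exp (eta * Vmax) * S t s \<le> pol_mean (ps (Suc t)) (U t) s"
proof -
  define N where "N = (\<Sum>a\<in>UNIV. ps t s a * exp (eta * max 0 (U t s a)) * U t s a)"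
  have "eta * S t s \<le> (\<Sum>a\<in>UNIV. ps t s a * ((exp (eta * max 0 (U t s a)) - 1) * U t s a))"
    unfolding pol_mean_def sum_distrib_left mult.left_commute[of eta]
    using eta_pos ps_pos
    by (intro sum_mono mult_left_mono pos_part_sq_le_exp_minus_1) (auto simp: less_imp_le)
  also have "\<dots> = N - pol_mean (ps t) (U t) s"
    by (simp add: N_def pol_mean_def algebra_simps sum_subtractf)
  finally have num: "eta * S t s \<le> N"
    by (simp add: pol_mean_adv_self[OF ps_stoch])
  have "eta / exp (eta * Vmax) * S t s = eta * S t s / exp (eta * Vmax)" by simp
  also have "\<dots> \<le> eta * S t s / Z t s"
    using Z_le[of t s] Z_ge_1[of t s] eta_pos S_nonneg[of t s] by (intro divide_left_mono) (auto intro!: mult_pos_pos)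
  also have "\<dots> \<le> N / Z t s"
    using num Z_ge_1[of t s] by (intro divide_right_mono) auto
  also have "\<dots> = pol_mean (ps (Suc t)) (U t) s"
    by (simp add: N_def pol_mean_def ps_Suc_eq sum_divide_distrib)
  finally show ?thesis .
qed

lemma pol_mean_next_adv_nonneg: "0 \<le> pol_mean (ps (Suc t)) (U t) s"
proof -
  have "0 \<le> eta / exp (eta * Vmax) * S t s" using eta_pos S_nonneg[of t s] by simp
  then show ?thesis using pol_mean_next_adv_ge[of t s] by linarith
qed

lemma Vf_improvement: "pol_mean (ps (Suc t)) (U t) s \<le> Vf P r g (ps (Suc t)) s - Vf P r g (ps t) s"
  unfolding performance_difference[OF ps_stoch ps_stoch]
  by (rule disc_sum_ge_first[OF ps_stoch pol_mean_next_adv_nonneg])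

lemma Vf_ps_incseq: "incseq (\<lambda>t. Vf P r g (ps t) s)"
proof (rule incseq_SucI)
  show "Vf P r g (ps t) s \<le> Vf P r g (ps (Suc t)) s" for t
    using Vf_improvement[of t s] pol_mean_next_adv_nonneg[of t s] by linarith
qed

definition V_limit where "V_limit s = (SUP t. Vf P r g (ps t) s)"

lemma Vf_ps_tendsto: "(\<lambda>t. Vf P r g (ps t) s) \<longlonglongrightarrow> V_limit s"
proof -
  have "bdd_above (range (\<lambda>t. Vf P r g (ps t) s))"
    using Vf_bounds[OF ps_stoch] by (intro bdd_aboveI[where M = Vmax]) auto
  then show ?thesis unfolding V_limit_def by (intro LIMSEQ_incseq_SUP Vf_ps_incseq)
qed

lemma S_tendsto_0: "(\<lambda>t. S t s) \<longlonglongrightarrow> 0"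
proof -
  define c where "c = eta / exp (eta * Vmax)"
  have c: "0 < c" unfolding c_def using eta_pos by simp
  have "(\<lambda>t. c * S t s) \<longlonglongrightarrow> 0"
  proof (rule tendsto_sandwich)
    show "\<forall>\<^sub>F t in sequentially. 0 \<le> c * S t s"
      using c S_nonneg by simp
    show "\<forall>\<^sub>F t in sequentially. c * S t s \<le> Vf P r g (ps (Suc t)) s - Vf P r g (ps t) s"
      unfolding c_def by (intro always_eventually allI order_trans[OF pol_mean_next_adv_ge Vf_improvement])
    have "(\<lambda>t. Vf P r g (ps (Suc t)) s - Vf P r g (ps t) s) \<longlonglongrightarrow> V_limit s - V_limit s"
      by (intro tendsto_intros Vf_ps_tendsto LIMSEQ_Suc)
    then show "(\<lambda>t. Vf P r g (ps (Suc t)) s - Vf P r g (ps t) s) \<longlonglongrightarrow> 0" by simp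
  qed simp
  then have "(\<lambda>t. c * S t s / c) \<longlonglongrightarrow> 0 / c" by (intro tendsto_intros) (use c in auto)
  then show ?thesis using c by simp
qed

lemma weighted_pos_adv_tendsto_0: "(\<lambda>t. ps t s a * max 0 (U t s a)) \<longlonglongrightarrow> 0"
proof (rule tendsto_sandwich)
  show "\<forall>\<^sub>F t in sequentially. 0 \<le> ps t s a * max 0 (U t s a)"
    using ps_pos by (simp add: less_imp_le)
  have "(ps t s a * max 0 (U t s a))\<^sup>2 \<le> S t s" for t
  proof -
    have "(ps t s a * max 0 (U t s a))\<^sup>2 = ps t s a * (ps t s a * (max 0 (U t s a))\<^sup>2)"
      by (simp add: power2_eq_square)
    also have "\<dots> \<le> ps t s a * (max 0 (U t s a))\<^sup>2"
      using ps_pos[of t s a] stoch_policy_le_1[OF ps_stoch, of t s a] by (intro mult_left_le_one_le) auto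
    also have "\<dots> \<le> S t s"
      unfolding pol_mean_def by (rule member_le_sum) (auto simp: less_imp_le ps_pos)
    finally show ?thesis .
  qed
  then have "ps t s a * max 0 (U t s a) \<le> sqrt (S t s)" for t
    by (rule real_le_rsqrt)
  then show "\<forall>\<^sub>F t in sequentially. ps t s a * max 0 (U t s a) \<le> sqrt (S t s)"
    by (intro always_eventually allI)
  show "(\<lambda>t. sqrt (S t s)) \<longlonglongrightarrow> 0"
    using tendsto_real_sqrt[OF S_tendsto_0] by simp
qed simp

lemma Z_tendsto_1: "(\<lambda>t. Z t s) \<longlonglongrightarrow> 1"
proof (rule tendsto_sandwich)
  let ?K = "eta * exp (eta * Vmax)"
  let ?W = "\<lambda>t. \<Sum>a\<in>UNIV. ps t s a * max 0 (U t s a)"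
  show "\<forall>\<^sub>F t in sequentially. 1 \<le> Z t s" using Z_ge_1 by simp
  have "Z t s - 1 \<le> ?K * ?W t" for t
  proof -
    have "Z t s - 1 = (\<Sum>a\<in>UNIV. ps t s a * (exp (eta * max 0 (U t s a)) - 1))"
      using ps_stoch[of t] by (simp add: stoch_policy_def right_diff_distrib sum_subtractf)
    also have "\<dots> \<le> (\<Sum>a\<in>UNIV. ps t s a * (eta * max 0 (U t s a) * exp (eta * Vmax)))"
    proof (intro sum_mono mult_left_mono)
      fix a
      have "exp (eta * max 0 (U t s a)) - 1 \<le> eta * max 0 (U t s a) * exp (eta * max 0 (U t s a))"
        using eta_pos by (intro exp_minus_1_le) simp
      also have "\<dots> \<le> eta * max 0 (U t s a) * exp (eta * Vmax)"
        using eta_pos eta_pos_adv_le by (intro mult_left_mono) auto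
      finally show "exp (eta * max 0 (U t s a)) - 1 \<le> eta * max 0 (U t s a) * exp (eta * Vmax)" .
    qed (simp add: less_imp_le ps_pos)
    finally show ?thesis by (simp add: sum_distrib_left algebra_simps)
  qed
  then show "\<forall>\<^sub>F t in sequentially. Z t s \<le> 1 + ?K * ?W t"
    by (intro always_eventually allI) (simp add: algebra_simps)
  have "?W \<longlonglongrightarrow> 0" by (intro tendsto_null_sum weighted_pos_adv_tendsto_0)
  from tendsto_add[OF tendsto_const tendsto_mult_right_zero[OF this]]
  show "(\<lambda>t. 1 + ?K * ?W t) \<longlonglongrightarrow> 1" by simp
qed simp

definition adv_limit where
  "adv_limit s a = r s a + g * (\<Sum>s'\<in>UNIV. P s a s' * V_limit s') - V_limit s"

lemma U_tendsto: "(\<lambda>t. U t s a) \<longlonglongrightarrow> adv_limit s a"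
  unfolding adv_def Qf_def adv_limit_def
  by (intro tendsto_diff tendsto_add tendsto_const tendsto_mult_left tendsto_sum Vf_ps_tendsto)

lemma ps_eventually_mono:
  assumes "0 < adv_limit s a"
  shows "\<forall>\<^sub>F t in sequentially. ps t s a \<le> ps (Suc t) s a"
proof -
  have "(\<lambda>t. exp (eta * U t s a) - Z t s) \<longlonglongrightarrow> exp (eta * adv_limit s a) - 1"
    by (intro tendsto_intros U_tendsto Z_tendsto_1)
  moreover have "0 < exp (eta * adv_limit s a) - 1" using assms eta_pos by simp
  ultimately have "\<forall>\<^sub>F t in sequentially. 0 < exp (eta * U t s a) - Z t s"
    by (rule order_tendstoD(1))
  moreover have "\<forall>\<^sub>F t in sequentially. 0 < U t s a"
    using U_tendsto assms by (rule order_tendstoD(1))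
  ultimately have "\<forall>\<^sub>F t in sequentially. 0 < U t s a \<and> 0 < exp (eta * U t s a) - Z t s"
    by (simp add: eventually_conj_iff)
  then show ?thesis
  proof eventually_elim
    case (elim t)
    then have "1 \<le> exp (eta * max 0 (U t s a)) / Z t s"
      using Z_ge_1[of t s] by simp
    then have "ps t s a * 1 \<le> ps t s a * (exp (eta * max 0 (U t s a)) / Z t s)"
      by (rule mult_left_mono) (simp add: less_imp_le ps_pos)
    then show ?case by (simp add: ps_Suc_eq)
  qed
qed

lemma adv_limit_nonpos: "adv_limit s a \<le> 0"
proof (rule ccontr)
  assume "\<not> adv_limit s a \<le> 0"
  then have pos: "0 < adv_limit s a" by simp
  then obtain N where mono: "\<And>t. t \<ge> N \<Longrightarrow> ps t s a \<le> ps (Suc t) s a"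
    using ps_eventually_mono[OF pos] unfolding eventually_sequentially by blast
  have lower: "ps N s a \<le> ps t s a" if "t \<ge> N" for t
    using that by (induction t rule: dec_induct) (auto intro: order_trans mono)
  have "(\<lambda>t. ps N s a * max 0 (U t s a)) \<longlonglongrightarrow> ps N s a * max 0 (adv_limit s a)"
    by (intro tendsto_intros U_tendsto)
  moreover have "\<forall>\<^sub>F t in sequentially. ps N s a * max 0 (U t s a) \<le> ps t s a * max 0 (U t s a)"
    unfolding eventually_sequentially by (auto intro!: exI[of _ N] mult_right_mono lower)
  ultimately have "ps N s a * max 0 (adv_limit s a) \<le> 0"
    by (rule tendsto_le[OF trivial_limit_sequentially weighted_pos_adv_tendsto_0])
  then show False using pos ps_pos[of N s a] by (simp add: mult_le_0_iff)
qed

lemma Vf_le_V_limit: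
  assumes p: "stoch_policy p"
  shows "Vf P r g p s0 \<le> V_limit s0"
proof -
  define E where "E t = (\<Sum>s\<in>UNIV. \<bar>pol_mean p (\<lambda>s a. U t s a - adv_limit s a) s\<bar>)" for t
  have "Vf P r g p s0 \<le> Vf P r g (ps t) s0 + E t / (1 - g)" for t
  proof -
    have "pol_mean p (U t) s \<le> E t" for s
    proof -
      have "pol_mean p adv_limit s \<le> 0"
        using p adv_limit_nonpos unfolding pol_mean_def stoch_policy_def
        by (intro sum_nonpos mult_nonneg_nonpos) auto
      then have "pol_mean p (U t) s \<le> pol_mean p (\<lambda>s a. U t s a - adv_limit s a) s"
        by (simp add: pol_mean_def right_diff_distrib sum_subtractf)
      also have "\<dots> \<le> E t"
        unfolding E_def by (rule order_trans[OF abs_ge_self], rule member_le_sum) auto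
      finally show ?thesis .
    qed
    then have "disc_sum P g p s0 (pol_mean p (U t)) \<le> disc_sum P g p s0 (\<lambda>_. E t)"
      by (rule disc_sum_mono[OF p])
    then show ?thesis
      using performance_difference[OF p ps_stoch[of t], of s0] by (simp add: disc_sum_const[OF p])
  qed
  note bound = this
  have "E \<longlonglongrightarrow> (\<Sum>s\<in>UNIV. \<bar>pol_mean p (\<lambda>s a. adv_limit s a - adv_limit s a) s\<bar>)"
    unfolding E_def pol_mean_def
    by (intro tendsto_sum tendsto_rabs tendsto_mult_left tendsto_diff tendsto_const U_tendsto)
  then have "E \<longlonglongrightarrow> 0" by (simp add: pol_mean_def)
  from tendsto_add[OF Vf_ps_tendsto tendsto_divide_zero[OF this]]
  have "(\<lambda>t. Vf P r g (ps t) s0 + E t / (1 - g)) \<longlonglongrightarrow> V_limit s0 + 0" .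
  from tendsto_le[OF trivial_limit_sequentially this tendsto_const] bound show ?thesis by simp
qed

lemma Vf_ps_tendsto_optimal:
  assumes opt: "optimal_policy P r g q"
  shows "(\<lambda>t. Vf P r g (ps t) s) \<longlonglongrightarrow> Vf P r g q s"
proof -
  have "V_limit s \<le> Vf P r g q s"
    unfolding V_limit_def using opt ps_stoch by (intro cSUP_least) (auto simp: optimal_policy_def)
  moreover have "Vf P r g q s \<le> V_limit s"
    using opt by (intro Vf_le_V_limit) (simp add: optimal_policy_def)
  ultimately show ?thesis using Vf_ps_tendsto[of s] by simp
qed

lemma Vrho_ps_tendsto_optimal:
  "optimal_policy P r g q \<Longrightarrow> (\<lambda>t. Vrho P r g rho (ps t)) \<longlonglongrightarrow> Vrho P r g rho q"
  unfolding Vrho_def by (intro tendsto_intros Vf_ps_tendsto_optimal)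

end

theorem theorem5:
  fixes P :: "'s::finite \<Rightarrow> 'a::finite \<Rightarrow> 's \<Rightarrow> real"
    and r :: "'s \<Rightarrow> 'a \<Rightarrow> real" and g :: real and rho :: "'s \<Rightarrow> real"
    and pistar :: "'s \<Rightarrow> 'a \<Rightarrow> real" and dmin :: real
  assumes mdp: "valid_mdp P r g rho"
    and opt: "optimal_policy P r g pistar"
    and uniq: "\<forall>p. optimal_policy P r g p \<longrightarrow> p = pistar"
    and dmin_pos: "0 < dmin"
    and reach: "\<forall>p. stoch_policy p \<and> full_support p \<longrightarrow> (\<forall>s. dmin \<le> dvis P g rho p s)"
  shows "\<exists>eta0>0. \<forall>eta theta0 ps.
           0 < eta \<and> eta \<le> eta0 \<and> ps 0 = softmax theta0 \<and>
           (\<forall>t. ps (Suc t) = eg_step P r g eta (ps t)) \<longrightarrow>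
           ((\<lambda>t. Vrho P r g rho (ps t)) \<longlonglongrightarrow> Vstar P r g rho) \<and>
           Vstar P r g rho = Vrho P r g rho pistar \<and>
           (\<forall>s a. (\<lambda>t. ps t s a) \<longlonglongrightarrow> pistar s a)"
proof -
  interpret mdp P r g using mdp by unfold_locales (auto simp: valid_mdp_def)
  have Vstar: "Vstar P r g rho = Vrho P r g rho pistar"
    using mdp opt by (intro Vstar_eq_Vrho_optimal) (auto simp: valid_mdp_def)
  have "((\<lambda>t. Vrho P r g rho (ps t)) \<longlonglongrightarrow> Vstar P r g rho) \<and>
      Vstar P r g rho = Vrho P r g rho pistar \<and> (\<forall>s a. (\<lambda>t. ps t s a) \<longlonglongrightarrow> pistar s a)"
    if "0 < eta" "ps 0 = softmax theta0" "\<forall>t. ps (Suc t) = eg_step P r g eta (ps t)"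
    for eta theta0 ps
  proof -
    interpret eg_run P r g eta ps
      using that by unfold_locales (auto simp: stoch_policy_softmax full_support_softmax)
    have V: "(\<lambda>t. Vrho P r g rho (ps t)) \<longlonglongrightarrow> Vrho P r g rho pistar"
      by (rule Vrho_ps_tendsto_optimal[OF opt])
    have "(\<lambda>t. ps t s a) \<longlonglongrightarrow> pistar s a" for s a
      using reach ps_stoch_full_support
      by (intro policy_tendsto_unique_optimal[OF opt uniq dmin_pos ps_stoch _ V]) blast
    with V Vstar show ?thesis by simp
  qed
  \<comment> \<open>Every positive step size works, so \<open>eta0 = 1\<close> is an arbitrary choice.\<close>
  then show ?thesis by (intro exI[of _ 1]) auto
qed

end
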